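(* Let $X$ be a $\mathbf B$-valued random variable with $\mathbb E\|X\|\ln^\delta(1+\|X\|)<\infty$ for some $\delta>0$. Then \[ \sum_{n=1}^{\infty}\frac{1}{n}\int_{\min\{u_n,n\}}^{n}\mathbb{P}(\|X\|>t)\,dt<\infty . \]
   Context: $(\mathbf{B},\|\cdot\|)$ is a real separable Banach space. For $n\ge1$, $u_n=\inf\{t\in\mathbb R:\ \mathbb P(\|X\|>t)<1/n\}$ (the quantile of order $1-1/n$ of $\|X\|$). *)

theory Defs
  imports "HOL-Probability.Probability"
begin

definition quantile_u :: "'a measure \<Rightarrow> ('a \<Rightarrow> 'b::real_normed_vector) \<Rightarrow> nat \<Rightarrow> real" where
  "quantile_u M X n = Inf {t::real. measure M {\<omega> \<in> space M. norm (X \<omega>) > t} < 1 / real n}"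

end

theory Submission
  imports Defs "HOL-Probability.Probability" "HOL-Library.Discrete_Functions"
begin

(* Write F t = P(norm X > t), p_j = F(2^j) and
   q_j = 2^j p_j.  For 2^k <= N < 2^(k+1) the definition of u_N gives F t < 1/N <= 2^-k on
   (min(u_N,N), N), so F is dominated there by the step function equal to 2^-k on (0,1)
   and to min(p_j, 2^-k) on [2^j, 2^(j+1)), j <= k.  Hence the N-th term is at most
   2^-k D_k with D_k = 2^-k + sum_{j<=k} min(q_j, 2^(j-k)), and dyadic condensation
   reduces the theorem to the summability of D_k.  Exchanging the order of summation,
   sum_k D_k is controlled by sum_j q_j (3 + log2^+(1/q_j)), and the entropy-type bound
   q log(1/q) <= C q (j+1)^delta + C (j+1)^(-3/2) reduces this to the summability of
   sum_j 2^j (j+1)^delta p_j, which is where the moment condition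
   E norm X ln^delta(1 + norm X) < infinity enters.
   The file develops, in order: elementary real inequalities; summation lemmas on
   sequences (the entropy series, the exchange of summation, dyadic condensation); the
   step-function bound for integrals of decreasing functions; the tail function of X
   (its decay, the dyadic form of the moment condition, the quantile u_N and the bound on
   each term); and finally the theorem, which chains these facts. *)

lemma ln_le_powr_div:
  fixes x d :: real assumes "x > 0" "d > 0"
  shows "ln x \<le> x powr d / d"
proof -
  have "ln (x powr d) \<le> x powr d - 1" using assms by (intro ln_le_minus_one) simp
  hence "d * ln x \<le> x powr d" using assms by (simp add: ln_powr)
  thus ?thesis using assms by (simp add: field_simps)
qed

text \<open>Either \<open>q \<ge> (j+1)\<^sup>-\<^sup>3\<close>, so \<open>log(1/q) \<le> 3 log(j+1)\<close>, or \<open>q log(1/q) \<le> 2 sqrt q\<close> is tiny.\<close>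
lemma entropy_bound:
  fixes q d :: real and j :: nat assumes q: "q \<ge> 0" and d: "d > 0"
  shows "q * max 0 (- log 2 q)
     \<le> 3 / (d * ln 2) * (q * (real j + 1) powr d) + 2 / ln 2 * (real j + 1) powr (-3/2)"
proof -
  have rhs_nonneg: "0 \<le> 3 / (d * ln 2) * (q * (real j + 1) powr d) + 2 / ln 2 * (real j + 1) powr (-3/2)"
    using q d by (intro add_nonneg_nonneg mult_nonneg_nonneg) auto
  show ?thesis
  proof (cases "q = 0 \<or> - log 2 q \<le> 0")
    case True thus ?thesis using rhs_nonneg by auto
  next
    case False
    hence qp: "q > 0" and ml: "max 0 (- log 2 q) = - ln q / ln 2" using q by (auto simp: log_def)
    show ?thesis
    proof (cases "q * (real j + 1) ^ 3 \<ge> 1")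
      case True
      have "ln 1 \<le> ln (q * (real j + 1) ^ 3)" using True qp by (subst ln_le_cancel_iff) auto
      hence "- ln q \<le> 3 * ln (real j + 1)" using qp by (simp add: ln_mult ln_realpow)
      also have "\<dots> \<le> 3 * ((real j + 1) powr d / d)" using ln_le_powr_div[of "real j + 1" d] d by simp
      finally have "- ln q / ln 2 \<le> 3 / (d * ln 2) * (real j + 1) powr d"
        by (simp add: divide_right_mono field_simps)
      hence "q * (- ln q / ln 2) \<le> q * (3 / (d * ln 2) * (real j + 1) powr d)"
        using qp by (intro mult_left_mono) auto
      thus ?thesis using ml q d
        by (simp add: mult_ac) (smt (verit) divide_nonneg_nonneg ln_gt_zero mult_nonneg_nonneg powr_ge_zero)
    next
      case False
      have "ln (1 / sqrt q) \<le> 1 / sqrt q - 1" using qp by (intro ln_le_minus_one) simp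
      hence "- ln q \<le> 2 / sqrt q" using qp by (simp add: ln_div ln_sqrt)
      hence "q * (- ln q) \<le> q * (2 / sqrt q)" using qp by (intro mult_left_mono) auto
      also have "\<dots> = 2 * sqrt q" using qp by (simp add: field_simps)
      also have "sqrt q \<le> (real j + 1) powr (-3/2)"
      proof -
        have "q \<le> 1 / (real j + 1) ^ 3" using False by (simp add: field_simps)
        hence "sqrt q \<le> sqrt (1 / (real j + 1) ^ 3)" by simp
        also have "1 / (real j + 1) ^ 3 = (real j + 1) powr (-3)"
          by (simp add: powr_minus powr_realpow divide_inverse)
        also have "sqrt \<dots> = (real j + 1) powr (-3/2)" by (simp add: powr_half_sqrt[symmetric] powr_powr)
        finally show ?thesis .
      qed
      finally have "q * (- ln q) / ln 2 \<le> 2 / ln 2 * (real j + 1) powr (-3/2)"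
        by (simp add: divide_right_mono field_simps)
      thus ?thesis using ml q d
        by (smt (verit) divide_nonneg_nonneg ln_gt_zero mult_nonneg_nonneg powr_ge_zero times_divide_eq_right)
    qed
  qed
qed

lemma geometric_tail_le: "(\<Sum>k<K. if m \<le> k then (1/2::real)^k else 0) \<le> 2*(1/2)^m"
proof -
  have "(\<Sum>k<K. if m \<le> k then (1/2::real)^k else 0) = (if K \<le> m then 0 else 2*(1/2)^m - 2*(1/2)^K)"
  proof (induction K)
    case (Suc K)
    thus ?case by (cases "Suc K \<le> m"; cases "K = m") auto
  qed simp
  thus ?thesis by simp
qed

text \<open>The first \<open>L = \<lceil>log\<^sub>2(1/q)\<rceil>\<close> terms are at most \<open>q\<close>, the rest form a geometric tail.\<close>
lemma min_geometric_sum_bound: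
  fixes q :: real assumes q: "q \<ge> 0"
  shows "(\<Sum>k<K. if j \<le> k then min q (2^j * (1/2)^k) else 0) \<le> q * (3 + max 0 (- log 2 q))"
proof (cases "q = 0")
  case True
  thus ?thesis by (auto intro: sum_nonpos simp: min_def)
next
  case False
  hence qp: "q > 0" using q by simp
  define L where "L = nat \<lceil>- log 2 q\<rceil>"
  define m where "m = j + L"
  have termwise: "(if j \<le> k then min q (2^j * (1/2)^k) else 0)
       \<le> (if k \<in> {j..<m} then q else 0) + 2^j * (if m \<le> k then (1/2::real)^k else 0)" for k
    using qp by (cases "j \<le> k"; cases "k < m") (auto simp: min_def)
  have "(\<Sum>k<K. if j \<le> k then min q (2^j * (1/2)^k) else 0)
     \<le> (\<Sum>k<K. if k \<in> {j..<m} then q else 0) + 2^j * (\<Sum>k<K. if m \<le> k then (1/2::real)^k else 0)"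
    using sum_mono[of "{..<K}", OF termwise] by (simp add: sum.distrib sum_distrib_left)
  also have "(\<Sum>k<K. if k \<in> {j..<m} then q else 0) \<le> real L * q"
  proof -
    have "(\<Sum>k<K. if k \<in> {j..<m} then q else 0) = (\<Sum>k\<in>{..<K} \<inter> {j..<m}. q)"
      by (rule sum.inter_restrict[symmetric]) simp
    moreover have "card ({..<K} \<inter> {j..<m}) \<le> card {j..<m}" by (intro card_mono) auto
    ultimately show ?thesis using qp by (simp add: m_def)
  qed
  also have "2^j * (\<Sum>k<K. if m \<le> k then (1/2::real)^k else 0) \<le> 2^j * (2*(1/2)^m)"
    by (intro mult_left_mono geometric_tail_le) simp
  also have "(2::real)^j * (2*(1/2)^m) = 2 * (1/2)^L"
    by (simp add: m_def power_add power_one_over)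
  also have "(1/2::real)^L \<le> q"
  proof -
    have "(1/2::real)^L = 2 powr (- real L)" by (simp add: powr_minus powr_realpow power_one_over inverse_eq_divide)
    also have "\<dots> \<le> 2 powr (log 2 q)"
    proof (rule powr_mono)
      show "- real L \<le> log 2 q" using real_nat_ceiling_ge[of "- log 2 q"] unfolding L_def by linarith
    qed simp
    also have "\<dots> = q" using qp by simp
    finally show ?thesis .
  qed
  also have "real L \<le> max 0 (- log 2 q) + 1"
    unfolding L_def using of_int_ceiling_le_add_one[of "- log 2 q"] by (cases "- log 2 q \<le> 0") auto
  hence "real L * q \<le> (max 0 (- log 2 q) + 1) * q" using qp by (intro mult_right_mono) auto
  hence "real L * q + 2 * q \<le> q * (3 + max 0 (- log 2 q))" by (simp add: algebra_simps)
  finally show ?thesis by simp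
qed

text \<open>The powers of two below \<open>y\<close> sum to at most \<open>2y\<close> (induction carries the
  bound \<open>2\<^sup>K - 1\<close> for the truncated sum as well).\<close>
lemma geometric_indicator_sum_le:
  fixes y :: real assumes "y \<ge> 0"
  shows "(\<Sum>j<K. if 2^j < y then (2::real)^j else 0) \<le> 2*y"
proof -
  have "(\<Sum>j<K. if 2^j < y then (2::real)^j else 0) \<le> 2*y
      \<and> (\<Sum>j<K. if 2^j < y then (2::real)^j else 0) \<le> 2^K - 1"
  proof (induction K)
    case 0 thus ?case using assms by simp
  next
    case (Suc K)
    thus ?case
      by (cases "2^K < y") (auto simp: le_diff_eq, smt (verit) one_le_power)
  qed
  thus ?thesis by simp
qed

lemma dyadic_weight_sum_le:
  fixes y d :: real assumes y: "y \<ge> 0" and d: "d > 0"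
  shows "(\<Sum>j<K. if 2^j < y then (2::real)^j * (real j + 1) powr d else 0)
     \<le> 2 * (2 / ln 2) powr d * (y * ln (1 + y) powr d)"
proof (cases "y \<le> 1")
  case True
  have "\<not> (2::real)^j < y" for j :: nat using True one_le_power[of "2::real" j] by linarith
  thus ?thesis using y by simp
next
  case False
  hence y1: "y > 1" by simp
  define R where "R = (log 2 y + 1) powr d"
  have termwise: "(if 2^j < y then (2::real)^j * (real j + 1) powr d else 0)
      \<le> R * (if 2^j < y then (2::real)^j else 0)" for j
  proof (cases "2^j < y")
    case True
    have "real j = log 2 (2^j)" by (simp add: log_nat_power)
    also have "\<dots> < log 2 y" using True y1 by (subst log_less_cancel_iff) auto
    finally have "(real j + 1) powr d \<le> R" unfolding R_def using d by (intro powr_mono2) auto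
    thus ?thesis using True by simp
  qed (simp add: R_def)
  have "(\<Sum>j<K. if 2^j < y then (2::real)^j * (real j + 1) powr d else 0)
      \<le> R * (\<Sum>j<K. if 2^j < y then (2::real)^j else 0)"
    using sum_mono[OF termwise] by (simp add: sum_distrib_left)
  also have "\<dots> \<le> R * (2*y)"
    using geometric_indicator_sum_le[OF y, of K] by (intro mult_left_mono) (auto simp: R_def)
  also have "R \<le> (2 / ln 2) powr d * ln (1 + y) powr d"
  proof -
    have "ln y \<le> ln (1+y)" using y1 by simp
    hence "log 2 y \<le> ln (1+y) / ln 2" by (simp add: log_def divide_right_mono)
    moreover have "1 \<le> ln (1+y) / ln 2" using y1 by simp
    moreover have "2 / ln 2 * ln (1 + y) = ln (1+y) / ln 2 + ln (1+y) / ln 2" by simp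
    ultimately have "log 2 y + 1 \<le> 2 / ln 2 * ln (1 + y)" by linarith
    moreover have "0 \<le> log 2 y + 1" using y1 by simp
    ultimately have "R \<le> (2 / ln 2 * ln (1 + y)) powr d" unfolding R_def using d by (intro powr_mono2) auto
    also have "\<dots> = (2 / ln 2) powr d * ln (1 + y) powr d" using y1 by (subst powr_mult) auto
    finally show ?thesis .
  qed
  hence "R * (2*y) \<le> (2 / ln 2) powr d * ln (1 + y) powr d * (2*y)"
    using y by (intro mult_right_mono) auto
  finally show ?thesis by (simp add: mult_ac)
qed

lemma summable_entropy_series:
  fixes q :: "nat \<Rightarrow> real" and d :: real
  assumes q: "\<And>j. q j \<ge> 0" and d: "d > 0" and weighted: "summable (\<lambda>j. q j * (real j + 1) powr d)"
  shows "summable (\<lambda>j. q j * (3 + max 0 (- log 2 (q j))))"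
proof (rule summable_comparison_test')
  define B where "B j = (3 + 3 / (d * ln 2)) * (q j * (real j + 1) powr d)
      + 2 / ln 2 * real (Suc j) powr (-3/2)" for j
  have "summable (\<lambda>j. real (Suc j) powr (-3/2))"
    using summable_real_powr_iff[of "-3/2"] by (subst summable_Suc_iff) simp
  thus "summable B" unfolding B_def by (intro summable_add summable_mult weighted)
  fix j :: nat
  have "q j * 1 \<le> q j * (real j + 1) powr d"
    using d by (intro mult_left_mono q ge_one_powr_ge_zero) auto
  moreover have "q j * max 0 (- log 2 (q j))
      \<le> 3 / (d * ln 2) * (q j * (real j + 1) powr d) + 2 / ln 2 * (real j + 1) powr (-3/2)"
    by (rule entropy_bound[OF q d])
  ultimately have "q j * (3 + max 0 (- log 2 (q j)))
      \<le> 3 * (q j * (real j + 1) powr d) + (3 / (d * ln 2) * (q j * (real j + 1) powr d)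
         + 2 / ln 2 * (real j + 1) powr (-3/2))"
    by (simp add: distrib_left)
  also have "\<dots> = B j" unfolding B_def by (simp add: algebra_simps)
  finally show "norm (q j * (3 + max 0 (- log 2 (q j)))) \<le> B j" using q[of j] by simp
qed

lemma summable_dyadic_min_sums:
  fixes q :: "nat \<Rightarrow> real"
  assumes q: "\<And>j. q j \<ge> 0" and rows: "summable (\<lambda>j. q j * (3 + max 0 (- log 2 (q j))))"
  shows "summable (\<lambda>k. \<Sum>j<Suc k. min (q j) (2^j * (1/2)^k))"
proof (rule summableI_nonneg_bounded)
  define a where "a j k = min (q j) (2^j * (1/2)^k)" for j k :: nat
  show "0 \<le> (\<Sum>j<Suc k. min (q j) (2^j * (1/2)^k))" for k using q by (simp add: sum_nonneg)
  fix K :: nat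
  have "(\<Sum>k<K. \<Sum>j<Suc k. a j k) = (\<Sum>k<K. \<Sum>j<K. if j \<le> k then a j k else 0)"
  proof (rule sum.cong[OF refl])
    fix k assume k: "k \<in> {..<K}"
    have "(\<Sum>j<K. if j \<le> k then a j k else 0) = (\<Sum>j\<in>{j \<in> {..<K}. j \<le> k}. a j k)"
      by (rule sum.inter_filter[symmetric]) simp
    also have "{j \<in> {..<K}. j \<le> k} = {..<Suc k}" using k by auto
    finally show "(\<Sum>j<Suc k. a j k) = (\<Sum>j<K. if j \<le> k then a j k else 0)" by (rule sym)
  qed
  also have "\<dots> = (\<Sum>j<K. \<Sum>k<K. if j \<le> k then a j k else 0)" by (rule sum.swap)
  also have "\<dots> \<le> (\<Sum>j<K. q j * (3 + max 0 (- log 2 (q j))))"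
    unfolding a_def by (intro sum_mono min_geometric_sum_bound q)
  also have "\<dots> \<le> (\<Sum>j. q j * (3 + max 0 (- log 2 (q j))))"
    using q by (intro sum_le_suminf rows) auto
  finally show "(\<Sum>k<K. \<Sum>j<Suc k. min (q j) (2^j * (1/2)^k)) \<le> (\<Sum>j. q j * (3 + max 0 (- log 2 (q j))))"
    unfolding a_def .
qed

text \<open>Grouping \<open>1 \<le> N < 2\<^sup>m\<close> into the dyadic blocks \<open>[2\<^sup>k, 2\<^sup>k\<^sup>+\<^sup>1)\<close>, on which
  \<open>floor_log N = k\<close>.\<close>
lemma sum_floor_log_condense: "(\<Sum>N=1..<2^m. h (floor_log N)) = (\<Sum>k<m. 2^k * (h k :: real))"
proof (induction m)
  case (Suc m)
  have "{1..<2^Suc m} = {1..<2^m} \<union> {2^m..<(2^Suc m :: nat)}" by auto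
  also have "(\<Sum>N\<in>\<dots>. h (floor_log N)) = (\<Sum>k<m. 2^k * h k) + (\<Sum>N = 2^m..<2^Suc m. h (floor_log N))"
    by (subst sum.union_disjoint) (insert Suc, auto)
  also have "(\<Sum>N = 2^m..<2^Suc m. h (floor_log N)) = (\<Sum>(_::nat) = 2^m..<2^Suc m. h m)"
    by (intro sum.cong refl) (auto intro!: arg_cong[where f=h] floor_log_eqI)
  finally show ?case by simp
qed simp

lemma summable_by_dyadic_condensation:
  fixes T D :: "nat \<Rightarrow> real"
  assumes T: "\<And>n. 0 \<le> T n" "\<And>n. T n \<le> (1/2)^floor_log (Suc n) * D (floor_log (Suc n))"
    and D: "\<And>k. 0 \<le> D k" "summable D"
  shows "summable T"
proof (rule summableI_nonneg_bounded)
  define f where "f N = (1/2::real)^floor_log N * D (floor_log N)" for N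
  show "0 \<le> T n" for n by (rule T)
  fix m
  have "(\<Sum>n<m. T n) \<le> (\<Sum>n<m. f (Suc n))" unfolding f_def using T by (intro sum_mono) simp
  also have "\<dots> = (\<Sum>N=1..<Suc m. f N)"
    using sum.shift_bounds_Suc_ivl[of f 0 m] by (simp add: atLeast0LessThan)
  also have "\<dots> \<le> (\<Sum>N=1..<2^m. f N)"
    using D(1) less_exp[of m] unfolding f_def by (intro sum_mono2) (auto simp: Suc_le_eq)
  also have "\<dots> = (\<Sum>k<m. D k)"
    unfolding f_def sum_floor_log_condense[of "\<lambda>k. (1/2)^k * D k"] by (simp add: power_one_over)
  also have "\<dots> \<le> suminf D" using D by (intro sum_le_suminf) auto
  finally show "(\<Sum>n<m. T n) \<le> suminf D" .
qed

section \<open>Integrals of a decreasing function against a dyadic step function\<close>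

text \<open>For a function \<open>F\<close> on the reals and a scale \<open>k\<close>, the quantity
  \<open>D\<^sub>k = 2\<^sup>-\<^sup>k + \<Sum>\<^sub>j\<^sub>\<le>\<^sub>k min(2\<^sup>j F(2\<^sup>j), 2\<^sup>j\<^sup>-\<^sup>k)\<close> is the integral of the step function
  equal to \<open>2\<^sup>-\<^sup>k\<close> on \<open>(0,1)\<close> and to \<open>min(F(2\<^sup>j), 2\<^sup>-\<^sup>k)\<close> on \<open>[2\<^sup>j, 2\<^sup>j\<^sup>+\<^sup>1)\<close>.\<close>
definition dyadic_bound :: "(real \<Rightarrow> real) \<Rightarrow> nat \<Rightarrow> real" where
  "dyadic_bound F k = (1/2)^k + (\<Sum>j<Suc k. min (2^j * F (2^j)) (2^j * (1/2)^k))"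

definition dyadic_step :: "(real \<Rightarrow> real) \<Rightarrow> nat \<Rightarrow> real \<Rightarrow> real" where
  "dyadic_step F k t = (1/2)^k * indicator {0<..<1} t
     + (\<Sum>j<Suc k. min (F (2^j)) ((1/2)^k) * indicator {2^j..<2^Suc j} t)"

lemma has_bochner_integral_dyadic_step:
  "has_bochner_integral lborel (dyadic_step F k) (dyadic_bound F k)"
proof -
  have "has_bochner_integral lborel (dyadic_step F k)
     ((1/2)^k * measure lborel {0<..<1::real}
      + (\<Sum>j<Suc k. min (F (2^j)) ((1/2)^k) * measure lborel {2^j..<2^Suc j::real}))"
    unfolding dyadic_step_def[abs_def]
    by (intro has_bochner_integral_add has_bochner_integral_sum has_bochner_integral_mult_right
        has_bochner_integral_real_indicator) auto
  also have "(1/2)^k * measure lborel {0<..<1::real}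
      + (\<Sum>j<Suc k. min (F (2^j)) ((1/2)^k) * measure lborel {2^j..<2^Suc j::real}) = dyadic_bound F k"
    unfolding dyadic_bound_def
    by (intro arg_cong2[where f="(+)"] sum.cong) (auto simp: min_def mult.commute)
  finally show ?thesis .
qed

lemma dyadic_bound_nonneg: "(\<And>t. 0 \<le> F t) \<Longrightarrow> 0 \<le> dyadic_bound F k"
  unfolding dyadic_bound_def by (intro add_nonneg_nonneg sum_nonneg) auto

lemma dyadic_block_exists:
  fixes t :: real assumes "1 \<le> t"
  obtains j :: nat where "2^j \<le> t" "t < 2^Suc j"
proof
  define m where "m = nat \<lfloor>t\<rfloor>"
  have m: "1 \<le> m" "real m \<le> t" "t < real m + 1" unfolding m_def using assms by linarith+
  have "2^floor_log m \<le> m" using m(1) by (intro floor_log_exp2_le) simp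
  hence "real (2^floor_log m) \<le> real m" by (simp only: of_nat_le_iff)
  hence "(2::real)^floor_log m \<le> real m" by (simp only: of_nat_power of_nat_numeral)
  thus "2^floor_log m \<le> t" using m(2) by linarith
  have "m + 1 \<le> 2^Suc (floor_log m)" using floor_log_exp2_gt[of m] by simp
  hence "real (m + 1) \<le> real (2^Suc (floor_log m))" by (simp only: of_nat_le_iff)
  hence "real m + 1 \<le> (2::real)^Suc (floor_log m)" by (simp only: of_nat_power of_nat_numeral of_nat_add of_nat_1)
  thus "t < 2^Suc (floor_log m)" using m(3) by linarith
qed

lemma le_dyadic_step:
  fixes F :: "real \<Rightarrow> real"
  assumes mono: "\<And>s t. s \<le> t \<Longrightarrow> F t \<le> F s" and nonneg: "\<And>t. 0 \<le> F t"
    and t: "0 < t" "t < 2^Suc k" and small: "F t \<le> (1/2)^k"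
  shows "F t \<le> dyadic_step F k t"
proof (cases "t < 1")
  case True
  have "F t \<le> (1/2)^k * indicator {0<..<1} t" using True t small by simp
  also have "\<dots> \<le> dyadic_step F k t"
    unfolding dyadic_step_def using nonneg by (intro add_increasing2 sum_nonneg) auto
  finally show ?thesis .
next
  case False
  hence "1 \<le> t" by simp
  then obtain j :: nat where j: "2^j \<le> t" "t < 2^Suc j" by (rule dyadic_block_exists)
  have "j < Suc k"
  proof -
    have "(2::real)^j < 2^Suc k" using j(1) t(2) by linarith
    thus ?thesis by (subst (asm) power_strict_increasing_iff) auto
  qed
  have "F t \<le> min (F (2^j)) ((1/2)^k) * indicator {2^j..<2^Suc j} t"
    using mono[OF j(1)] small j by simp
  also have "\<dots> \<le> (\<Sum>i<Suc k. min (F (2^i)) ((1/2)^k) * indicator {2^i..<2^Suc i} t)"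
    using \<open>j < Suc k\<close> nonneg by (intro member_le_sum mult_nonneg_nonneg) simp_all
  also have "\<dots> \<le> dyadic_step F k t" unfolding dyadic_step_def by simp
  finally show ?thesis .
qed

lemma interval_integral_le_dyadic_bound:
  fixes F :: "real \<Rightarrow> real" and a b :: real
  assumes mono: "\<And>s t. s \<le> t \<Longrightarrow> F t \<le> F s" and nonneg: "\<And>t. 0 \<le> F t"
    and ab: "0 \<le> a" "a \<le> b" "b \<le> 2^Suc k" and small: "\<And>t. a < t \<Longrightarrow> t < b \<Longrightarrow> F t \<le> (1/2)^k"
  shows "0 \<le> (LBINT t = ereal a..ereal b. F t)" "(LBINT t = ereal a..ereal b. F t) \<le> dyadic_bound F k"
proof -
  have eq: "(LBINT t = ereal a..ereal b. F t) = integral\<^sup>L lborel (\<lambda>t. indicator {a<..<b} t * F t)"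
    unfolding interval_lebesgue_integral_def set_lebesgue_integral_def using ab by simp
  show "0 \<le> (LBINT t = ereal a..ereal b. F t)"
    unfolding eq using nonneg by (intro Bochner_Integration.integral_nonneg) simp
  have step_nonneg: "0 \<le> dyadic_step F k t" for t
    unfolding dyadic_step_def using nonneg by (intro add_nonneg_nonneg sum_nonneg) auto
  have "indicator {a<..<b} t * F t \<le> dyadic_step F k t" for t
  proof (cases "t \<in> {a<..<b}")
    case True
    hence "F t \<le> dyadic_step F k t" using ab small by (intro le_dyadic_step[OF mono nonneg]) auto
    thus ?thesis using True by simp
  qed (simp add: step_nonneg)
  hence "integral\<^sup>L lborel (\<lambda>t. indicator {a<..<b} t * F t) \<le> integral\<^sup>L lborel (dyadic_step F k)"
    by (intro integral_mono' integrable.intros[OF has_bochner_integral_dyadic_step] step_nonneg)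
  thus "(LBINT t = ereal a..ereal b. F t) \<le> dyadic_bound F k"
    unfolding eq has_bochner_integral_integral_eq[OF has_bochner_integral_dyadic_step] .
qed

section \<open>The tail function of a random variable\<close>

definition tail_prob :: "'a measure \<Rightarrow> ('a \<Rightarrow> 'b::real_normed_vector) \<Rightarrow> real \<Rightarrow> real" where
  "tail_prob M X t = measure M {\<omega> \<in> space M. norm (X \<omega>) > t}"

lemma (in finite_measure) tail_prob_antimono:
  assumes [measurable]: "X \<in> borel_measurable M" and "s \<le> t"
  shows "tail_prob M X t \<le> tail_prob M X s"
  unfolding tail_prob_def using assms(2) by (intro finite_measure_mono) auto

text \<open>In a finite measure space the tail function tends to zero, so it eventually drops below
  any positive level; in particular the set defining \<open>u\<^sub>N\<close> is nonempty.\<close>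
lemma (in finite_measure) tail_prob_eventually_small:
  assumes [measurable]: "X \<in> borel_measurable M" and "e > 0"
  shows "\<exists>t. tail_prob M X t < e"
proof -
  define A where "A n = {\<omega> \<in> space M. norm (X \<omega>) > real n}" for n :: nat
  have "A n \<in> sets M" for n unfolding A_def by measurable
  hence "range A \<subseteq> sets M" by auto
  moreover have "decseq A" unfolding A_def decseq_def by auto
  ultimately have "(\<lambda>n. measure M (A n)) \<longlonglongrightarrow> measure M (\<Inter>n. A n)"
    by (rule finite_Lim_measure_decseq)
  moreover have "\<omega> \<notin> (\<Inter>n. A n)" for \<omega>
  proof -
    obtain n where "norm (X \<omega>) < real n" using reals_Archimedean2 by blast
    hence "\<omega> \<notin> A n" unfolding A_def by auto
    thus ?thesis by blast
  qed
  hence "(\<Inter>n. A n) = {}" by blast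
  ultimately have "\<forall>\<^sub>F n in sequentially. measure M (A n) < e"
    using \<open>e > 0\<close> by (intro order_tendstoD(2)) auto
  then obtain n where "measure M (A n) < e" by (auto simp: eventually_sequentially)
  thus ?thesis unfolding A_def tail_prob_def by blast
qed

text \<open>The moment condition \<open>E norm X ln\<^sup>d(1 + norm X) < \<infinity>\<close> in dyadic form:
  \<open>\<Sum>\<^sub>j 2\<^sup>j (j+1)\<^sup>d P(norm X > 2\<^sup>j) < \<infinity>\<close>, by monotone convergence and
  \<open>dyadic_weight_sum_le\<close> under the expectation.\<close>
lemma (in finite_measure) summable_weighted_dyadic_tails:
  fixes X :: "'a \<Rightarrow> 'b::{banach, second_countable_topology}"
  assumes [measurable]: "X \<in> borel_measurable M" and d: "d > 0"
    and moment: "integrable M (\<lambda>\<omega>. norm (X \<omega>) * (ln (1 + norm (X \<omega>))) powr d)"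
  shows "summable (\<lambda>j. 2^j * tail_prob M X (2^j) * (real j + 1) powr d)"
proof -
  define C where "C = 2 * (2 / ln 2) powr d"
  define A where "A j = {\<omega> \<in> space M. norm (X \<omega>) > 2^j}" for j :: nat
  define c where "c j = (2::real)^j * (real j + 1) powr d" for j :: nat
  have [measurable]: "A j \<in> sets M" for j unfolding A_def by measurable
  have c0: "c j \<ge> 0" for j unfolding c_def by simp
  have "(\<Sum>j. ennreal (c j * measure M (A j))) = (\<Sum>j. \<integral>\<^sup>+ \<omega>. ennreal (c j) * indicator (A j) \<omega> \<partial>M)"
    by (intro suminf_cong) (simp add: nn_integral_cmult_indicator emeasure_eq_measure ennreal_mult c0)
  also have "\<dots> = (\<integral>\<^sup>+ \<omega>. (\<Sum>j. ennreal (c j) * indicator (A j) \<omega>) \<partial>M)"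
    by (rule nn_integral_suminf[symmetric]) simp
  also have "\<dots> \<le> (\<integral>\<^sup>+ \<omega>. ennreal (C * (norm (X \<omega>) * (ln (1 + norm (X \<omega>))) powr d)) \<partial>M)"
  proof (intro nn_integral_mono suminf_le_const)
    fix \<omega> n assume \<omega>: "\<omega> \<in> space M"
    have "(\<Sum>j<n. ennreal (c j) * indicator (A j) \<omega>)
        = (\<Sum>j<n. ennreal (if 2^j < norm (X \<omega>) then c j else 0))"
      by (intro sum.cong refl) (auto simp: A_def \<omega>)
    also have "\<dots> = ennreal (\<Sum>j<n. if 2^j < norm (X \<omega>) then c j else 0)"
      by (rule sum_ennreal) (simp add: c0)
    also have "\<dots> \<le> ennreal (C * (norm (X \<omega>) * (ln (1 + norm (X \<omega>))) powr d))"
      using dyadic_weight_sum_le[OF norm_ge_zero[of "X \<omega>"] d, of n]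
      by (intro ennreal_leI) (simp add: C_def c_def if_distrib cong: if_cong)
    finally show "(\<Sum>j<n. ennreal (c j) * indicator (A j) \<omega>)
        \<le> ennreal (C * (norm (X \<omega>) * (ln (1 + norm (X \<omega>))) powr d))" .
  qed (rule summableI)
  also have "\<dots> = ennreal (\<integral>\<omega>. C * (norm (X \<omega>) * (ln (1 + norm (X \<omega>))) powr d) \<partial>M)"
    by (intro nn_integral_eq_integral integrable_mult_right moment) (auto simp: C_def)
  finally have "(\<Sum>j. ennreal (c j * measure M (A j))) \<noteq> top" by (auto simp: top_unique)
  hence "summable (\<lambda>j. c j * measure M (A j))" by (intro summable_suminf_not_top) (simp add: c0)
  thus ?thesis by (simp add: c_def A_def tail_prob_def mult_ac)
qed

lemma (in prob_space) quantile_u_properties: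
  assumes [measurable]: "X \<in> borel_measurable M" and N: "N \<ge> 1"
  shows "0 \<le> quantile_u M X N" "\<And>t. quantile_u M X N < t \<Longrightarrow> tail_prob M X t < 1 / real N"
proof -
  define S where "S = {t. tail_prob M X t < 1 / real N}"
  have u: "quantile_u M X N = Inf S" unfolding quantile_u_def S_def tail_prob_def ..
  have "S \<noteq> {}" using tail_prob_eventually_small[of X "1 / real N"] N unfolding S_def by auto
  have S_nonneg: "0 \<le> t" if "t \<in> S" for t
  proof (rule ccontr)
    assume "\<not> 0 \<le> t"
    hence "{\<omega> \<in> space M. norm (X \<omega>) > t} = space M" by (auto intro: less_le_trans[OF _ norm_ge_zero])
    hence "tail_prob M X t = 1" unfolding tail_prob_def by (simp add: prob_space)
    thus False using that N unfolding S_def by (simp add: divide_le_eq)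
  qed
  show "0 \<le> quantile_u M X N" unfolding u using \<open>S \<noteq> {}\<close> S_nonneg by (intro cInf_greatest)
  have "bdd_below S" using S_nonneg by (intro bdd_belowI) auto
  fix t assume "quantile_u M X N < t"
  then obtain s where "s \<in> S" "s < t"
    using cInf_less_iff[OF \<open>S \<noteq> {}\<close> \<open>bdd_below S\<close>] unfolding u by auto
  thus "tail_prob M X t < 1 / real N" using tail_prob_antimono[of X s t] unfolding S_def by simp
qed

text \<open>The \<open>N\<close>-th term of the series, \<open>2\<^sup>k \<le> N < 2\<^sup>k\<^sup>+\<^sup>1\<close>, is at most \<open>2\<^sup>-\<^sup>k D\<^sub>k\<close>, since on
  \<open>(min(u\<^sub>N,N), N)\<close> the tail function is below \<open>1/N \<le> 2\<^sup>-\<^sup>k\<close>.\<close>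
lemma (in prob_space) series_term_le_dyadic_bound:
  assumes X[measurable]: "X \<in> borel_measurable M" and N: "N \<ge> 1"
  defines "I \<equiv> LBINT t = ereal (min (quantile_u M X N) (real N))..ereal (real N). tail_prob M X t"
  shows "0 \<le> 1 / real N * I"
    and "1 / real N * I \<le> (1/2)^floor_log N * dyadic_bound (tail_prob M X) (floor_log N)"
proof -
  define k where "k = floor_log N"
  have "2^k \<le> N" unfolding k_def using N by (intro floor_log_exp2_le) simp
  hence "(2::real)^k \<le> real N" by (metis of_nat_le_iff of_nat_numeral of_nat_power)
  hence N_inv: "1 / real N \<le> (1/2)^k" using N by (simp add: power_one_over frac_le)
  have "N < 2^Suc k" unfolding k_def using floor_log_exp2_gt[of N] by simp
  hence "real N \<le> 2^Suc k" by (metis less_imp_le of_nat_le_iff of_nat_numeral of_nat_power)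
  define a where "a = min (quantile_u M X N) (real N)"
  have small: "tail_prob M X t \<le> (1/2)^k" if "a < t" "t < real N" for t
  proof -
    have "quantile_u M X N < t" using that unfolding a_def by linarith
    hence "tail_prob M X t < 1 / real N" by (rule quantile_u_properties(2)[OF X N])
    thus ?thesis using N_inv by linarith
  qed
  have "0 \<le> a" unfolding a_def using quantile_u_properties(1)[OF X N] by simp
  hence I_bounds: "0 \<le> I \<and> I \<le> dyadic_bound (tail_prob M X) k"
    unfolding I_def a_def[symmetric] using \<open>real N \<le> 2^Suc k\<close> small
    by (intro conjI interval_integral_le_dyadic_bound tail_prob_antimono)
       (auto simp: tail_prob_def a_def)
  thus "0 \<le> 1 / real N * I" by simp
  show "1 / real N * I \<le> (1/2)^floor_log N * dyadic_bound (tail_prob M X) (floor_log N)"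
    unfolding k_def[symmetric] using N_inv I_bounds
    by (intro mult_mono) auto
qed

theorem lemma5p6:
  fixes M :: "'a measure" and X :: "'a \<Rightarrow> 'b::{banach, second_countable_topology}"
    and \<delta> :: real
  assumes "prob_space M"
    and "X \<in> borel_measurable M"
    and "\<delta> > 0"
    and "integrable M (\<lambda>\<omega>. norm (X \<omega>) * (ln (1 + norm (X \<omega>))) powr \<delta>)"
  shows "summable (\<lambda>n::nat. (1 / real (Suc n)) *
           (LBINT t = ereal (min (quantile_u M X (Suc n)) (real (Suc n)))..ereal (real (Suc n)).
              measure M {\<omega> \<in> space M. norm (X \<omega>) > t}))"
proof -
  interpret prob_space M by fact
  define q where "q j = 2^j * tail_prob M X (2^j)" for j :: nat
  have q_nonneg: "0 \<le> q j" for j unfolding q_def tail_prob_def by simp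
  have "summable (\<lambda>j. q j * (real j + 1) powr \<delta>)"
    using summable_weighted_dyadic_tails[OF assms(2-4)] unfolding q_def .
  hence "summable (\<lambda>k. \<Sum>j<Suc k. min (q j) (2^j * (1/2)^k))"
    by (intro summable_dyadic_min_sums q_nonneg summable_entropy_series[OF q_nonneg assms(3)])
  hence D_summable: "summable (dyadic_bound (tail_prob M X))"
    unfolding dyadic_bound_def[abs_def] q_def by (intro summable_add summable_geometric) simp_all
  have D_nonneg: "0 \<le> dyadic_bound (tail_prob M X) k" for k
    by (intro dyadic_bound_nonneg) (simp add: tail_prob_def)
  show ?thesis
    unfolding tail_prob_def[symmetric]
    by (intro summable_by_dyadic_condensation[OF _ _ D_nonneg D_summable]
        series_term_le_dyadic_bound[OF assms(2)]) simp_all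
qed

end
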